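(* Let $w=w_1\cdots w_N$ be a 132-avoiding sorting network of $\mathfrak S_n$ and $k\in[N-1]$, and let $u=(Q^{\to}_w)^{-1}(k)$ be the cell of $Q^\to_w$ containing $k$. Then $(w_k,w_{k+1})=(j,j+1)$ for some $j$ if and only if $(Q^\to_w,u)$ is a horizontal adjacency; and $(w_k,w_{k+1})=(j+1,j)$ for some $j$ if and only if $(Q^\to_w,u)$ is a vertical adjacency.
   Context: $N=\binom n2$; sorting networks, intermediate permutations and 132-avoidance as usual ($\sigma_k$ is $\sigma_{k-1}$ with entries in positions $w_k,w_k+1$ swapped; 132-avoiding means all $\sigma_k$ avoid 132). For a 132-avoiding sorting network $w$, $Q_w$ is the filling in which, for each $j\in[n-1]$, column $j$ contains from top to bottom the indices $m$ with $w_m=j$ in increasing order; it is a standard Young tableau of staircase shape $(n-1,\dots,1)$. $Q^\to_w$ is obtained by shifting row $i$ of $Q_w$ to the right by $i-1$ (cell $(i,j)\mapsto(i,i+j-1)$); it is a shifted standard Young tableau of shape $\{(i,j):1\le i\le j\le n-1\}$. For a (shifted) standard tableau $T$ with cell set $D$ and $u=(i,j)\in D$: $(T,u)$ is a horizontal adjacency if $(i,j+1)\in D$ and $T(i,j+1)=T(u)+1$; a vertical adjacency if $(i+1,j)\in D$ and $T(i+1,j)=T(u)+1$. *)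

theory Defs
  imports Main
begin

text \<open>Permutations of [n] are lists of length n (one-line notation, values 1..n).
  Words and positions are 1-indexed: letter w_m is \<open>letter w m = w ! (m-1)\<close>.\<close>

definition letter :: "nat list \<Rightarrow> nat \<Rightarrow> nat" where
  "letter w m = w ! (m - 1)"

definition swap_adj :: "nat list \<Rightarrow> nat \<Rightarrow> nat list" where
  "swap_adj s p = s[p - 1 := s ! p, p := s ! (p - 1)]"

text \<open>Intermediate permutation sigma_k: sigma_0 is the identity, sigma_k is sigma_(k-1)
  with the entries in positions w_k, w_k+1 swapped.\<close>
definition interm :: "nat \<Rightarrow> nat list \<Rightarrow> nat \<Rightarrow> nat list" where
  "interm n w k = foldl swap_adj [1..<n+1] (take k w)"

definition sorting_network :: "nat \<Rightarrow> nat list \<Rightarrow> bool" where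
  "sorting_network n w \<longleftrightarrow> length w = n choose 2 \<and> (\<forall>x\<in>set w. 1 \<le> x \<and> x \<le> n - 1)
     \<and> interm n w (length w) = rev [1..<n+1]"

definition contains132 :: "nat list \<Rightarrow> bool" where
  "contains132 s \<longleftrightarrow> (\<exists>a b c. a < b \<and> b < c \<and> c < length s \<and> s ! a < s ! c \<and> s ! c < s ! b)"

definition avoiding132 :: "nat \<Rightarrow> nat list \<Rightarrow> bool" where
  "avoiding132 n w \<longleftrightarrow> sorting_network n w \<and> (\<forall>k \<le> length w. \<not> contains132 (interm n w k))"

text \<open>Q_w: column j contains, top to bottom, the indices m with w_m = j in increasing order.\<close>
definition Qtab :: "nat list \<Rightarrow> nat \<times> nat \<Rightarrow> nat" where
  "Qtab w = (\<lambda>(i, j). sorted_list_of_set {m. 1 \<le> m \<and> m \<le> length w \<and> letter w m = j} ! (i - 1))"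

definition Qshift :: "nat list \<Rightarrow> nat \<times> nat \<Rightarrow> nat" where
  "Qshift w = (\<lambda>(i, j). Qtab w (i, j + 1 - i))"

definition shifted_staircase :: "nat \<Rightarrow> (nat \<times> nat) set" where
  "shifted_staircase n = {(i, j). 1 \<le> i \<and> i \<le> j \<and> j \<le> n - 1}"

definition horiz_adj :: "(nat \<times> nat \<Rightarrow> nat) \<Rightarrow> (nat \<times> nat) set \<Rightarrow> nat \<times> nat \<Rightarrow> bool" where
  "horiz_adj T D u \<longleftrightarrow> (fst u, snd u + 1) \<in> D \<and> T (fst u, snd u + 1) = T u + 1"

definition vert_adj :: "(nat \<times> nat \<Rightarrow> nat) \<Rightarrow> (nat \<times> nat) set \<Rightarrow> nat \<times> nat \<Rightarrow> bool" where
  "vert_adj T D u \<longleftrightarrow> (fst u + 1, snd u) \<in> D \<and> T (fst u + 1, snd u) = T u + 1"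

end

theory Submission
  imports Defs "HOL-Combinatorics.Transposition"
begin

text \<open>Since \<open>N\<close> equals the number of inversions of the reversal and an adjacent transposition
  changes the inversion set by exactly one pair, every step of a sorting network creates a new
  inversion: step \<open>t\<close> swaps an ascent \<open>(x, y)\<close>, and each pair \<open>1 \<le> x < y \<le> n\<close> is swapped
  exactly once. For a 132-avoiding network the values left of \<open>x\<close> at that moment are exactly
  those strictly between \<open>x\<close> and \<open>y\<close>, so the letter is \<open>y - x\<close>; moreover, the swap of
  \<open>(x, y)\<close> comes after the swaps of \<open>(x, b)\<close> for \<open>x < b < y\<close> and of \<open>(a, y)\<close> for \<open>a < x\<close>.
  Hence cell \<open>(x, y - 1)\<close> of \<open>Q\<^sup>\<rightarrow>\<^sub>w\<close> holds the time of the swap of \<open>(x, y)\<close>, and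
  consecutive letters \<open>j, j + 1\<close> (resp.\ \<open>j + 1, j\<close>) mean that the next swapped pair is
  \<open>(x, y + 1)\<close> (resp.\ \<open>(x + 1, y)\<close>), i.e.\ the next entry sits to the right of (resp.\ below)
  the current one.\<close>

section \<open>Inversions and adjacent transpositions\<close>

definition precedes :: "'a list \<Rightarrow> 'a \<Rightarrow> 'a \<Rightarrow> bool" where
  "precedes s c d \<longleftrightarrow> (\<exists>i j. i < j \<and> j < length s \<and> s ! i = c \<and> s ! j = d)"

definition inversions :: "'a::linorder list \<Rightarrow> ('a \<times> 'a) set" where
  "inversions s = {(a, b). a < b \<and> precedes s b a}"

definition value_pairs :: "nat \<Rightarrow> (nat \<times> nat) set" where
  "value_pairs n = {(a, b). 1 \<le> a \<and> a < b \<and> b \<le> n}"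

lemma precedes_imp_in_set: "precedes s c d \<Longrightarrow> c \<in> set s \<and> d \<in> set s"
  unfolding precedes_def by auto

lemma precedes_asym:
  assumes "distinct s" "precedes s c d"
  shows "\<not> precedes s d c"
proof
  assume "precedes s d c"
  then obtain i j where ij: "i < j" "j < length s" "s ! i = d" "s ! j = c"
    unfolding precedes_def by blast
  from assms(2) obtain i' j' where ij': "i' < j'" "j' < length s" "s ! i' = c" "s ! j' = d"
    unfolding precedes_def by blast
  have "i = j'" "j = i'"
    using ij ij' assms(1) by (metis nth_eq_iff_index_eq order.strict_trans)+
  then show False using ij ij' by simp
qed

lemma precedes_nth_iff:
  assumes "distinct s" "q < length s"
  shows "precedes s c (s ! q) \<longleftrightarrow> c \<in> set (take q s)"
proof
  assume "precedes s c (s ! q)"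
  then obtain i j where ij: "i < j" "j < length s" "s ! i = c" "s ! j = s ! q"
    unfolding precedes_def by blast
  then have "j = q" using assms nth_eq_iff_index_eq by blast
  then show "c \<in> set (take q s)" using ij by (auto simp: in_set_conv_nth)
next
  assume "c \<in> set (take q s)"
  then obtain i where "i < q" "s ! i = c" using assms(2) by (auto simp: in_set_conv_nth)
  then show "precedes s c (s ! q)" unfolding precedes_def using assms(2) by blast
qed

lemma card_precedes_nth:
  assumes "distinct s" "q < length s"
  shows "card {c. precedes s c (s ! q)} = q"
proof -
  have "{c. precedes s c (s ! q)} = set (take q s)"
    using precedes_nth_iff[OF assms] by blast
  then show ?thesis using assms by (simp add: distinct_card)
qed

lemma finite_inversions: "finite (inversions s)"
proof (rule finite_subset)
  show "inversions s \<subseteq> set s \<times> set s"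
    unfolding inversions_def by (auto dest: precedes_imp_in_set)
qed simp

lemma length_swap_adj [simp]: "length (swap_adj s p) = length s"
  by (simp add: swap_adj_def)

lemma distinct_swap_adj: "Suc q < length s \<Longrightarrow> distinct (swap_adj s (Suc q)) = distinct s"
  by (simp add: swap_adj_def distinct_swap)

lemma set_swap_adj: "Suc q < length s \<Longrightarrow> set (swap_adj s (Suc q)) = set s"
  by (simp add: swap_adj_def set_swap)

lemma nth_swap_adj:
  assumes "Suc q < length s" "i < length s"
  shows "swap_adj s (Suc q) ! i = s ! Transposition.transpose q (Suc q) i"
  using assms by (auto simp: swap_adj_def nth_list_update transpose_def)

lemma transpose_adjacent_less:
  assumes "i < j" "(i, j) \<noteq> (q, Suc q)"
  shows "Transposition.transpose q (Suc q) i < Transposition.transpose q (Suc q) j"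
  using assms by (auto simp: transpose_def)

lemma transpose_adjacent_less_length:
  "Suc q < l \<Longrightarrow> i < l \<Longrightarrow> Transposition.transpose q (Suc q) i < l"
  by (auto simp: transpose_def)

lemma swap_adj_nth_pos:
  assumes "Suc q < length s"
  shows "swap_adj s (Suc q) ! q = s ! Suc q" and "swap_adj s (Suc q) ! Suc q = s ! q"
  using assms by (simp_all add: swap_adj_def nth_list_update)

lemma swap_adj_swap_adj: "Suc q < length s \<Longrightarrow> swap_adj (swap_adj s (Suc q)) (Suc q) = s"
  unfolding swap_adj_def by (simp add: list_update_swap)

lemma precedes_adjacent: "Suc q < length s \<Longrightarrow> precedes s (s ! q) (s ! Suc q)"
  unfolding precedes_def by blast

lemma precedes_swap_adj_if_precedes:
  assumes "Suc q < length s" "precedes s c d" "(c, d) \<noteq> (s ! q, s ! Suc q)"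
  shows "precedes (swap_adj s (Suc q)) c d"
proof -
  let ?\<tau> = "Transposition.transpose q (Suc q)"
  obtain i j where ij: "i < j" "j < length s" "s ! i = c" "s ! j = d"
    using assms(2) unfolding precedes_def by blast
  then have "(i, j) \<noteq> (q, Suc q)" using assms(3) by auto
  moreover have "swap_adj s (Suc q) ! ?\<tau> i = c" "swap_adj s (Suc q) ! ?\<tau> j = d"
    using ij nth_swap_adj[OF assms(1)] transpose_adjacent_less_length[OF assms(1)] by auto
  ultimately show ?thesis unfolding precedes_def length_swap_adj
    using transpose_adjacent_less[OF ij(1)] transpose_adjacent_less_length[OF assms(1)] ij by metis
qed

text \<open>The forward direction is the backward one applied to the swapped list, as swapping twice
  is the identity.\<close>
lemma precedes_swap_adj:
  assumes "distinct s" "Suc q < length s"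
  shows "precedes (swap_adj s (Suc q)) c d \<longleftrightarrow>
    (precedes s c d \<and> (c, d) \<noteq> (s ! q, s ! Suc q)) \<or> (c, d) = (s ! Suc q, s ! q)"
    (is "precedes ?s' c d \<longleftrightarrow> _")
proof
  have q': "Suc q < length ?s'" using assms(2) by simp
  assume prec': "precedes ?s' c d"
  show "(precedes s c d \<and> (c, d) \<noteq> (s ! q, s ! Suc q)) \<or> (c, d) = (s ! Suc q, s ! q)"
  proof (cases "(c, d) = (s ! Suc q, s ! q)")
    case False
    then have "precedes (swap_adj ?s' (Suc q)) c d"
      using precedes_swap_adj_if_precedes[OF q' prec'] swap_adj_nth_pos[OF assms(2)] by simp
    then have "precedes s c d" using swap_adj_swap_adj[OF assms(2)] by simp
    moreover have "(c, d) \<noteq> (s ! q, s ! Suc q)"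
      using prec' precedes_asym[OF _ precedes_adjacent[OF q']] assms swap_adj_nth_pos[OF assms(2)]
      by (auto simp: distinct_swap_adj)
    ultimately show ?thesis by blast
  qed simp
next
  assume "(precedes s c d \<and> (c, d) \<noteq> (s ! q, s ! Suc q)) \<or> (c, d) = (s ! Suc q, s ! q)"
  then show "precedes ?s' c d"
    using precedes_swap_adj_if_precedes[OF assms(2)] precedes_adjacent[of q ?s']
      swap_adj_nth_pos[OF assms(2)] assms(2) by auto
qed

lemma inversions_swap_adj_ascent:
  assumes "distinct s" "Suc q < length s" "s ! q < s ! Suc q"
  shows "inversions (swap_adj s (Suc q)) = insert (s ! q, s ! Suc q) (inversions s)"
    and "(s ! q, s ! Suc q) \<notin> inversions s"
proof -
  have "(a, b) \<in> inversions (swap_adj s (Suc q)) \<longleftrightarrow> (a, b) \<in> insert (s ! q, s ! Suc q) (inversions s)"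
    for a b
    unfolding inversions_def mem_Collect_eq case_prod_conv insert_iff prod.inject
      precedes_swap_adj[OF assms(1,2)] using assms(3) by (metis less_asym)
  then show "inversions (swap_adj s (Suc q)) = insert (s ! q, s ! Suc q) (inversions s)"
    by (simp add: set_eq_iff)
  show "(s ! q, s ! Suc q) \<notin> inversions s"
    unfolding inversions_def using precedes_asym[OF assms(1) precedes_adjacent[OF assms(2)]] by auto
qed

lemma inversions_swap_adj_descent:
  assumes "distinct s" "Suc q < length s" "s ! Suc q < s ! q"
  shows "inversions (swap_adj s (Suc q)) = inversions s - {(s ! Suc q, s ! q)}"
    and "(s ! Suc q, s ! q) \<in> inversions s"
proof -
  have "(a, b) \<in> inversions (swap_adj s (Suc q)) \<longleftrightarrow> (a, b) \<in> inversions s - {(s ! Suc q, s ! q)}"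
    for a b
    unfolding inversions_def mem_Collect_eq case_prod_conv Diff_iff singleton_iff prod.inject
      precedes_swap_adj[OF assms(1,2)] using assms(3) by (metis less_asym)
  then show "inversions (swap_adj s (Suc q)) = inversions s - {(s ! Suc q, s ! q)}"
    by (simp add: set_eq_iff)
  show "(s ! Suc q, s ! q) \<in> inversions s"
    unfolding inversions_def using precedes_adjacent[OF assms(2)] assms(3) by auto
qed

lemma card_value_pairs: "card (value_pairs n) = n choose 2"
proof (induction n)
  case 0
  have "value_pairs 0 = {}" unfolding value_pairs_def by auto
  then show ?case by simp
next
  case (Suc n)
  have split: "value_pairs (Suc n) = value_pairs n \<union> (\<lambda>a. (a, Suc n)) ` {1..n}"
    unfolding value_pairs_def by auto
  have "finite (value_pairs n)"
    by (rule finite_subset[of _ "{0..n} \<times> {0..n}"]) (auto simp: value_pairs_def)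
  moreover have "value_pairs n \<inter> (\<lambda>a. (a, Suc n)) ` {1..n} = {}"
    unfolding value_pairs_def by auto
  moreover have "card ((\<lambda>a. (a, Suc n)) ` {1..n}) = n"
    by (subst card_image) (auto simp: inj_on_def)
  ultimately have "card (value_pairs (Suc n)) = (n choose 2) + n"
    unfolding split using Suc by (subst card_Un_disjoint) auto
  then show ?case by (simp add: numeral_2_eq_2)
qed

lemma inversions_upt: "inversions [1..<n+1] = {}"
proof -
  have "\<not> precedes [1..<n+1] b a" if "a < b" for a b :: nat
    using that unfolding precedes_def by (auto simp del: upt_Suc)
  then show ?thesis unfolding inversions_def by auto
qed

lemma inversions_rev_upt: "inversions (rev [1..<n+1]) = value_pairs n"
proof
  show "inversions (rev [1..<n+1]) \<subseteq> value_pairs n"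
    unfolding inversions_def value_pairs_def by (auto dest!: precedes_imp_in_set)
  have nth: "rev [1..<n+1] ! i = n - i" if "i < n" for i
    using that by (simp add: rev_nth del: upt_Suc)
  have "precedes (rev [1..<n+1]) b a" if "1 \<le> a" "a < b" "b \<le> n" for a b
    unfolding precedes_def using that nth[of "n - b"] nth[of "n - a"]
    by (intro exI[of _ "n - b"] exI[of _ "n - a"]) (simp del: upt_Suc)
  then show "value_pairs n \<subseteq> inversions (rev [1..<n+1])"
    unfolding inversions_def value_pairs_def by auto
qed

section \<open>The swaps of a 132-avoiding sorting network\<close>

locale avoiding_network =
  fixes n :: nat and w :: "nat list"
  assumes avoiding: "avoiding132 n w"
begin

abbreviation N :: nat where "N \<equiv> length w"

definition sigma :: "nat \<Rightarrow> nat list" where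
  "sigma t = interm n w t"

text \<open>Steps are counted from 0: step \<open>t\<close> turns \<open>sigma t\<close> into \<open>sigma (Suc t)\<close> by swapping
  the 0-based positions \<open>pos t\<close> and \<open>Suc (pos t)\<close>, i.e.\ it is the paper's step \<open>t + 1\<close>.\<close>
definition pos :: "nat \<Rightarrow> nat" where
  "pos t = w ! t - 1"

definition left :: "nat \<Rightarrow> nat" where
  "left t = sigma t ! pos t"

definition right :: "nat \<Rightarrow> nat" where
  "right t = sigma t ! Suc (pos t)"

definition swapped :: "nat \<Rightarrow> nat \<times> nat" where
  "swapped t = (left t, right t)"

lemma sorting_network: "sorting_network n w"
  using avoiding unfolding avoiding132_def by simp

lemma length_w: "N = n choose 2"
  using sorting_network unfolding sorting_network_def by simp

lemma letter_range: "t < N \<Longrightarrow> 1 \<le> w ! t \<and> w ! t \<le> n - 1"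
  using sorting_network nth_mem unfolding sorting_network_def by blast

lemma Suc_pos: "t < N \<Longrightarrow> Suc (pos t) = w ! t"
  using letter_range[of t] unfolding pos_def by simp

lemma Suc_pos_less: "t < N \<Longrightarrow> Suc (pos t) < n"
  using letter_range[of t] unfolding pos_def by linarith

lemma sigma_0: "sigma 0 = [1..<n+1]"
  by (simp add: sigma_def interm_def)

lemma inversions_sigma_0: "inversions (sigma 0) = {}"
  unfolding sigma_0 by (rule inversions_upt)

lemma sigma_Suc: "t < N \<Longrightarrow> sigma (Suc t) = swap_adj (sigma t) (Suc (pos t))"
  by (simp add: sigma_def interm_def take_Suc_conv_app_nth Suc_pos)

lemma sigma_final: "sigma N = rev [1..<n+1]"
  using sorting_network unfolding sorting_network_def sigma_def by blast

lemma inversions_sigma_final: "inversions (sigma N) = value_pairs n"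
  unfolding sigma_final by (rule inversions_rev_upt)

lemma sigma_avoids_132: "t \<le> N \<Longrightarrow> \<not> contains132 (sigma t)"
  using avoiding unfolding avoiding132_def sigma_def by simp

lemma sigma_permutation:
  "t \<le> N \<Longrightarrow> length (sigma t) = n \<and> distinct (sigma t) \<and> set (sigma t) = {1..n}"
proof (induction t)
  case 0
  show ?case unfolding sigma_0 by auto
next
  case (Suc t)
  then have "t < N" by simp
  with Suc show ?case
    using Suc_pos_less[of t] by (simp add: sigma_Suc distinct_swap_adj set_swap_adj)
qed

lemma length_sigma: "t \<le> N \<Longrightarrow> length (sigma t) = n"
  and distinct_sigma: "t \<le> N \<Longrightarrow> distinct (sigma t)"
  and set_sigma: "t \<le> N \<Longrightarrow> set (sigma t) = {1..n}"
  using sigma_permutation by blast+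

lemma Suc_pos_less_length: "t < N \<Longrightarrow> Suc (pos t) < length (sigma t)"
  using Suc_pos_less[of t] length_sigma[of t] by simp

lemma left_neq_right: "t < N \<Longrightarrow> left t \<noteq> right t"
  unfolding left_def right_def
  using distinct_sigma[of t] Suc_pos_less_length[of t] by (simp add: nth_eq_iff_index_eq)

lemma card_inversions_sigma_Suc_le:
  assumes "t < N"
  shows "card (inversions (sigma (Suc t))) \<le> Suc (card (inversions (sigma t)))"
proof (cases "left t < right t")
  case True
  then show ?thesis
    using inversions_swap_adj_ascent(1)[OF distinct_sigma[of t] Suc_pos_less_length[of t]] assms
    by (simp add: sigma_Suc left_def right_def card_insert_if finite_inversions)
next
  case False
  then have "right t < left t" using left_neq_right[OF assms] by simp
  then show ?thesis
    using inversions_swap_adj_descent(1)[OF distinct_sigma[of t] Suc_pos_less_length[of t]] assms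
    by (simp add: sigma_Suc left_def right_def card_Diff1_le finite_inversions le_SucI)
qed

lemma card_inversions_sigma_growth:
  "t \<le> t' \<Longrightarrow> t' \<le> N \<Longrightarrow> card (inversions (sigma t')) \<le> card (inversions (sigma t)) + (t' - t)"
proof (induction t' rule: dec_induct)
  case (step t')
  then show ?case using card_inversions_sigma_Suc_le[of t'] by simp
qed simp

text \<open>The word is reduced: a step creating no inversion would leave fewer than \<open>N\<close> steps
  to produce the \<open>N\<close> inversions of the reversal.\<close>
lemma left_less_right:
  assumes "t < N"
  shows "left t < right t"
proof (rule ccontr)
  assume "\<not> left t < right t"
  then have "right t < left t" using left_neq_right[OF assms] by simp
  then have "inversions (sigma (Suc t)) = inversions (sigma t) - {(right t, left t)}"
    and "(right t, left t) \<in> inversions (sigma t)"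
    using inversions_swap_adj_descent[OF distinct_sigma[of t] Suc_pos_less_length[of t]] assms
    by (simp_all add: sigma_Suc left_def right_def)
  then have descent: "card (inversions (sigma (Suc t))) < card (inversions (sigma t))"
    by (metis card_Diff1_less finite_inversions)
  have "N = card (inversions (sigma N))"
    unfolding inversions_sigma_final card_value_pairs by (rule length_w)
  also have "\<dots> \<le> card (inversions (sigma (Suc t))) + (N - Suc t)"
    using card_inversions_sigma_growth[of "Suc t" N] assms by simp
  also have "\<dots> < t + (N - t)"
    using descent card_inversions_sigma_growth[of 0 t] assms
    by (simp add: inversions_sigma_0)
  finally show False using assms by simp
qed

lemma inversions_sigma_Suc:
  assumes "t < N"
  shows "inversions (sigma (Suc t)) = insert (swapped t) (inversions (sigma t))"
    and "swapped t \<notin> inversions (sigma t)"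
  using inversions_swap_adj_ascent[OF distinct_sigma[of t] Suc_pos_less_length[of t]]
    left_less_right[OF assms] assms
  by (simp_all add: sigma_Suc swapped_def left_def right_def)

lemma inversions_sigma: "t \<le> N \<Longrightarrow> inversions (sigma t) = swapped ` {..<t}"
proof (induction t)
  case 0
  show ?case by (simp add: inversions_sigma_0)
next
  case (Suc t)
  then show ?case using inversions_sigma_Suc(1)[of t] by (simp add: lessThan_Suc)
qed

lemma inversions_sigma_mono: "t \<le> t' \<Longrightarrow> t' \<le> N \<Longrightarrow> inversions (sigma t) \<subseteq> inversions (sigma t')"
  using inversions_sigma[of t] inversions_sigma[of t'] by auto

lemma inverted_imp_swapped_before:
  "t \<le> N \<Longrightarrow> p \<in> inversions (sigma t) \<Longrightarrow> \<exists>t' < t. swapped t' = p"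
  using inversions_sigma[of t] by auto

lemma inj_on_swapped: "inj_on swapped {..<N}"
proof -
  have "swapped t \<noteq> swapped t'" if "t < t'" "t' < N" for t t'
  proof -
    have "swapped t \<in> inversions (sigma t')" using inversions_sigma[of t'] that by auto
    then show ?thesis using inversions_sigma_Suc(2)[of t'] that by auto
  qed
  then show ?thesis unfolding inj_on_def by (metis lessThan_iff linorder_neqE_nat)
qed

lemma swapped_image: "swapped ` {..<N} = value_pairs n"
  using inversions_sigma[of N] by (simp add: inversions_sigma_final)

lemma swapped_range: "t < N \<Longrightarrow> 1 \<le> left t \<and> left t < right t \<and> right t \<le> n"
  using swapped_image unfolding value_pairs_def swapped_def by blast

text \<open>The two consequences of 132-avoidance: when \<open>(x, y)\<close> is swapped, every \<open>b\<close> with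
  \<open>x < b < y\<close> lies to the left of \<open>x\<close> (else \<open>x y b\<close> is a 132), and every \<open>a < x\<close> lies to
  the right of \<open>y\<close> (else \<open>a y x\<close> is a 132 right after the swap).\<close>
lemma inverted_left_between:
  assumes t: "t < N" and b: "left t < b" "b < right t"
  shows "(left t, b) \<in> inversions (sigma t)"
proof -
  let ?s = "sigma t" and ?q = "pos t"
  have "b \<in> set ?s" using set_sigma[of t] swapped_range[OF t] b t by auto
  then obtain r where r: "r < n" "?s ! r = b" using length_sigma[of t] t by (auto simp: in_set_conv_nth)
  have "r \<noteq> ?q" "r \<noteq> Suc ?q" using r b unfolding left_def right_def by auto
  moreover have "\<not> Suc ?q < r"
  proof
    assume "Suc ?q < r"
    then have "contains132 ?s" unfolding contains132_def
      using r b length_sigma[of t] t unfolding left_def right_def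
      by (intro exI[of _ ?q] exI[of _ "Suc ?q"] exI[of _ r]) auto
    then show False using sigma_avoids_132[of t] t by simp
  qed
  ultimately have "r < ?q" by simp
  then have "precedes ?s b (left t)"
    unfolding precedes_def left_def using r Suc_pos_less[OF t] length_sigma[of t] t
    by (intro exI[of _ r] exI[of _ ?q]) auto
  then show ?thesis unfolding inversions_def using b by simp
qed

lemma inverted_below_left:
  assumes t: "t < N" and a: "1 \<le> a" "a < left t"
  shows "(a, right t) \<in> inversions (sigma t)"
proof -
  let ?s = "sigma t" and ?q = "pos t"
  have q: "Suc ?q < n" using Suc_pos_less[OF t] .
  have "a \<in> set ?s" using set_sigma[of t] swapped_range[OF t] a t by auto
  then obtain r where r: "r < n" "?s ! r = a" using length_sigma[of t] t by (auto simp: in_set_conv_nth)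
  have "r \<noteq> ?q" "r \<noteq> Suc ?q" using r a swapped_range[OF t] unfolding left_def right_def by auto
  moreover have "\<not> r < ?q"
  proof
    assume "r < ?q"
    moreover have "sigma (Suc t) ! r = a" "sigma (Suc t) ! ?q = right t" "sigma (Suc t) ! Suc ?q = left t"
      unfolding sigma_Suc[OF t] using \<open>r < ?q\<close> r q length_sigma[of t] t
      by (auto simp: nth_swap_adj transpose_def left_def right_def)
    ultimately have "contains132 (sigma (Suc t))" unfolding contains132_def
      using q a swapped_range[OF t] length_sigma[of "Suc t"] t
      by (intro exI[of _ r] exI[of _ ?q] exI[of _ "Suc ?q"]) auto
    then show False using sigma_avoids_132[of "Suc t"] t by simp
  qed
  ultimately have "Suc ?q < r" by simp
  then have "precedes ?s (right t) a"
    unfolding precedes_def right_def using r length_sigma[of t] t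
    by (intro exI[of _ "Suc ?q"] exI[of _ r]) auto
  then show ?thesis unfolding inversions_def using a swapped_range[OF t] by simp
qed

lemma not_precedes_left_below:
  assumes t: "t < N" and c: "1 \<le> c" "c < left t"
  shows "\<not> precedes (sigma t) c (left t)"
proof
  assume prec: "precedes (sigma t) c (left t)"
  obtain t' where t': "t' < t" "swapped t' = (c, right t)"
    using inverted_imp_swapped_before[of t] inverted_below_left[OF t c] t by auto
  then have "(c, left t) \<in> inversions (sigma t')"
    using inverted_left_between[of t' "left t"] swapped_range[OF t] c t by (simp add: swapped_def)
  then have "precedes (sigma t) (left t) c"
    using inversions_sigma_mono[of t' t] t' t unfolding inversions_def by auto
  then show False using precedes_asym[OF distinct_sigma[of t] prec] t by simp
qed

lemma not_inverted_left_above: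
  assumes t: "t < N" and c: "right t \<le> c"
  shows "(left t, c) \<notin> inversions (sigma t)"
proof
  assume inv: "(left t, c) \<in> inversions (sigma t)"
  show False
  proof (cases "c = right t")
    case True
    then show False using inv inversions_sigma_Suc(2)[OF t] by (simp add: swapped_def)
  next
    case False
    obtain t' where t': "t' < t" "swapped t' = (left t, c)"
      using inverted_imp_swapped_before[of t] inv t by auto
    then have "(left t, right t) \<in> inversions (sigma t')"
      using inverted_left_between[of t' "right t"] c False swapped_range[OF t] t
      by (simp add: swapped_def)
    then have "swapped t \<in> inversions (sigma t)"
      using inversions_sigma_mono[of t' t] t' t by (auto simp: swapped_def)
    then show False using inversions_sigma_Suc(2)[OF t] by simp
  qed
qed

lemma precedes_left_iff:
  assumes t: "t < N"
  shows "precedes (sigma t) c (left t) \<longleftrightarrow> left t < c \<and> c < right t"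
proof
  assume prec: "precedes (sigma t) c (left t)"
  have "1 \<le> c" using precedes_imp_in_set[OF prec] set_sigma[of t] t by auto
  then have "\<not> c < left t" using not_precedes_left_below[OF t] prec by blast
  moreover have "c \<noteq> left t" using precedes_asym[OF distinct_sigma[of t] prec] prec t by auto
  ultimately have "left t < c" by simp
  then have "(left t, c) \<in> inversions (sigma t)" using prec unfolding inversions_def by simp
  then have "\<not> right t \<le> c" using not_inverted_left_above[OF t] by blast
  with \<open>left t < c\<close> show "left t < c \<and> c < right t" by simp
next
  assume "left t < c \<and> c < right t"
  then have "(left t, c) \<in> inversions (sigma t)" using inverted_left_between[OF t] by blast
  then show "precedes (sigma t) c (left t)" unfolding inversions_def by simp
qed

text \<open>The entries to the left of position \<open>pos t\<close> are exactly the values strictly between the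
  two swapped ones, so the letter can be read off the swapped pair.\<close>
lemma letter_eq_right_minus_left:
  assumes t: "t < N"
  shows "w ! t = right t - left t"
proof -
  have "pos t = card {c. precedes (sigma t) c (left t)}"
    using card_precedes_nth[OF distinct_sigma[of t], of "pos t"] Suc_pos_less_length[OF t] t
    by (simp add: left_def)
  also have "{c. precedes (sigma t) c (left t)} = {left t<..<right t}"
    by (intro set_eqI) (simp add: precedes_left_iff[OF t])
  finally have "pos t = right t - Suc (left t)" by simp
  then show ?thesis using Suc_pos[OF t] swapped_range[OF t] by arith
qed

definition swap_time :: "nat \<times> nat \<Rightarrow> nat" where
  "swap_time = the_inv_into {..<N} swapped"

lemma swap_time_swapped: "t < N \<Longrightarrow> swap_time (swapped t) = t"
  unfolding swap_time_def using the_inv_into_f_f[OF inj_on_swapped] by simp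

lemma swapped_swap_time:
  assumes "p \<in> value_pairs n"
  shows "swap_time p < N" and "swapped (swap_time p) = p"
proof -
  have p: "p \<in> swapped ` {..<N}" using assms by (simp add: swapped_image)
  show "swap_time p < N"
    using the_inv_into_into[OF inj_on_swapped p order.refl] unfolding swap_time_def by simp
  show "swapped (swap_time p) = p"
    using f_the_inv_into_f[OF inj_on_swapped p] unfolding swap_time_def .
qed

lemma swap_time_eq_iff: "p \<in> value_pairs n \<Longrightarrow> t < N \<Longrightarrow> swap_time p = t \<longleftrightarrow> swapped t = p"
  using swapped_swap_time swap_time_swapped by metis

lemma swap_time_less_if_inverted:
  assumes "p \<in> value_pairs n" "t \<le> N" "p \<in> inversions (sigma t)"
  shows "swap_time p < t"
  using inverted_imp_swapped_before[OF assms(2,3)] swap_time_swapped assms(2) by fastforce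

lemma swap_time_less_right_increase:
  assumes "1 \<le> a" "a < b" "b < c" "c \<le> n"
  shows "swap_time (a, b) < swap_time (a, c)"
proof -
  let ?t = "swap_time (a, c)"
  have "?t < N" "left ?t = a" "right ?t = c"
    using swapped_swap_time[of "(a, c)"] assms by (auto simp: value_pairs_def swapped_def)
  then have "(a, b) \<in> inversions (sigma ?t)" using inverted_left_between[of ?t b] assms by simp
  then show ?thesis using swap_time_less_if_inverted \<open>?t < N\<close> assms by (simp add: value_pairs_def)
qed

lemma swap_time_less_left_increase:
  assumes "1 \<le> a" "a < a'" "a' < b" "b \<le> n"
  shows "swap_time (a, b) < swap_time (a', b)"
proof -
  let ?t = "swap_time (a', b)"
  have "?t < N" "left ?t = a'" "right ?t = b"
    using swapped_swap_time[of "(a', b)"] assms by (auto simp: value_pairs_def swapped_def)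
  then have "(a, b) \<in> inversions (sigma ?t)" using inverted_below_left[of ?t a] assms by simp
  then show ?thesis using swap_time_less_if_inverted \<open>?t < N\<close> assms by (simp add: value_pairs_def)
qed

lemma swap_time_diagonal_mono:
  assumes "1 \<le> c" "1 \<le> a" "a < a'" "a' + c \<le> n"
  shows "swap_time (a, a + c) < swap_time (a', a' + c)"
  using \<open>a < a'\<close>[unfolded less_eq_Suc_le]
proof (induction a' rule: dec_induct)
  case base
  show ?case
    using swap_time_less_right_increase[of a "a + c" "Suc (a + c)"]
      swap_time_less_left_increase[of a "Suc a" "Suc a + c"] assms by simp
next
  case (step k)
  have "swap_time (k, k + c) < swap_time (Suc k, Suc k + c)"
    using swap_time_less_right_increase[of k "k + c" "Suc (k + c)"]
      swap_time_less_left_increase[of k "Suc k" "Suc k + c"] step assms by simp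
  with step show ?case by simp
qed

lemma letter_swap_time: "(a, b) \<in> value_pairs n \<Longrightarrow> w ! swap_time (a, b) = b - a"
  using swapped_swap_time[of "(a, b)"] letter_eq_right_minus_left[of "swap_time (a, b)"]
  by (simp add: swapped_def)

section \<open>The tableau \<open>Q\<^sub>w\<close>\<close>

text \<open>The letter \<open>c\<close> occurs exactly at the swaps of the pairs \<open>(a, a + c)\<close>, and these
  occur in increasing order of \<open>a\<close>; so column \<open>c\<close> of \<open>Q\<^sub>w\<close> lists their (1-based) times.\<close>
lemma occurrences_of_letter:
  assumes "1 \<le> c"
  shows "{m. 1 \<le> m \<and> m \<le> N \<and> letter w m = c}
    = set (map (\<lambda>a. Suc (swap_time (a, a + c))) [1..<n-c+1])"
proof (rule set_eqI, rule iffI)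
  fix m assume "m \<in> {m. 1 \<le> m \<and> m \<le> N \<and> letter w m = c}"
  then have m: "1 \<le> m" "m - 1 < N" "w ! (m - 1) = c" unfolding letter_def by auto
  let ?t = "m - 1"
  have "right ?t = left ?t + c"
    using letter_eq_right_minus_left[OF m(2)] m(3) swapped_range[OF m(2)] by arith
  then have "m = Suc (swap_time (left ?t, left ?t + c))" and "left ?t \<in> {1..<n-c+1}"
    using swap_time_swapped[OF m(2)] swapped_range[OF m(2)] m(1) by (auto simp: swapped_def)
  then show "m \<in> set (map (\<lambda>a. Suc (swap_time (a, a + c))) [1..<n-c+1])"
    by (force simp del: upt_Suc)
next
  fix m assume "m \<in> set (map (\<lambda>a. Suc (swap_time (a, a + c))) [1..<n-c+1])"
  then obtain a where a: "1 \<le> a" "a + c \<le> n" "m = Suc (swap_time (a, a + c))" by auto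
  then have "(a, a + c) \<in> value_pairs n" using assms by (simp add: value_pairs_def)
  then show "m \<in> {m. 1 \<le> m \<and> m \<le> N \<and> letter w m = c}"
    using swapped_swap_time(1) letter_swap_time a unfolding letter_def by fastforce
qed

lemma Qtab_eq:
  assumes c: "1 \<le> c" and i: "1 \<le> i" "i + c \<le> n"
  shows "Qtab w (i, c) = Suc (swap_time (i, i + c))"
proof -
  define L where "L = map (\<lambda>a. Suc (swap_time (a, a + c))) [1..<n-c+1]"
  have length_L: "length L = n - c" unfolding L_def by (simp; arith)
  have L_nth: "L ! p = Suc (swap_time (Suc p, Suc p + c))" if "p < length L" for p
    using that length_L unfolding L_def by (simp del: upt_Suc)
  have "sorted_wrt (<) L" unfolding sorted_wrt_iff_nth_less
  proof (intro allI impI)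
    fix p r assume "p < r" "r < length L"
    then show "L ! p < L ! r"
      using swap_time_diagonal_mono[of c "Suc p" "Suc r"] c length_L by (simp add: L_nth)
  qed
  then have "sorted_list_of_set (set L) = L"
    by (simp add: strict_sorted_iff sorted_list_of_set_sort_remdups distinct_remdups_id sorted_sort_id)
  then have "Qtab w (i, c) = L ! (i - 1)"
    unfolding Qtab_def using occurrences_of_letter[OF c] by (simp add: L_def)
  also have "\<dots> = Suc (swap_time (i, i + c))" using L_nth[of "i - 1"] length_L i by simp
  finally show ?thesis .
qed

lemma Qshift_eq:
  assumes "(i, j) \<in> shifted_staircase n"
  shows "Qshift w (i, j) = Suc (swap_time (i, Suc j))"
proof -
  have "1 \<le> Suc j - i" "1 \<le> i" "i + (Suc j - i) \<le> n" "i + (Suc j - i) = Suc j"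
    using assms unfolding shifted_staircase_def by auto
  then show ?thesis using Qtab_eq[of "Suc j - i" i] unfolding Qshift_def by simp
qed

lemma Qshift_eq_Suc_iff:
  assumes "(i, j) \<in> shifted_staircase n" "t < N"
  shows "Qshift w (i, j) = Suc t \<longleftrightarrow> swapped t = (i, Suc j)"
proof -
  have "(i, Suc j) \<in> value_pairs n"
    using assms(1) unfolding shifted_staircase_def value_pairs_def by auto
  then show ?thesis using Qshift_eq[OF assms(1)] swap_time_eq_iff[OF _ assms(2)] by simp
qed

lemma cell_of_entry:
  assumes "t < N"
  shows "(left t, right t - 1) \<in> shifted_staircase n" and "Qshift w (left t, right t - 1) = Suc t"
proof -
  show cell: "(left t, right t - 1) \<in> shifted_staircase n"
    using swapped_range[OF assms] unfolding shifted_staircase_def by auto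
  show "Qshift w (left t, right t - 1) = Suc t"
    using Qshift_eq_Suc_iff[OF cell assms] swapped_range[OF assms] by (simp add: swapped_def)
qed

lemma the_cell_of_entry:
  assumes "t < N"
  shows "(THE c. c \<in> shifted_staircase n \<and> Qshift w c = Suc t) = (left t, right t - 1)"
proof (rule the_equality)
  show "(left t, right t - 1) \<in> shifted_staircase n \<and> Qshift w (left t, right t - 1) = Suc t"
    using cell_of_entry[OF assms] by simp
next
  fix c assume c: "c \<in> shifted_staircase n \<and> Qshift w c = Suc t"
  obtain i j where ij: "c = (i, j)" by fastforce
  then have "swapped t = (i, Suc j)" using Qshift_eq_Suc_iff[of i j t] c assms by simp
  then show "c = (left t, right t - 1)" by (simp add: swapped_def ij)
qed

lemma horiz_adj_cell_iff:
  assumes "Suc t < N"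
  shows "horiz_adj (Qshift w) (shifted_staircase n) (left t, right t - 1)
    \<longleftrightarrow> swapped (Suc t) = (left t, Suc (right t))"
proof -
  have t: "t < N" using assms by simp
  have "horiz_adj (Qshift w) (shifted_staircase n) (left t, right t - 1)
      \<longleftrightarrow> (left t, right t) \<in> shifted_staircase n \<and> Qshift w (left t, right t) = Suc (Suc t)"
    unfolding horiz_adj_def using cell_of_entry(2)[OF t] swapped_range[OF t] by simp
  also have "\<dots> \<longleftrightarrow> swapped (Suc t) = (left t, Suc (right t))"
  proof (cases "(left t, right t) \<in> shifted_staircase n")
    case True
    then show ?thesis using Qshift_eq_Suc_iff[OF True assms] by simp
  next
    case False
    then have "right t = n" using swapped_range[OF t] unfolding shifted_staircase_def by auto
    then show ?thesis using False swapped_range[OF assms] by (auto simp: swapped_def)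
  qed
  finally show ?thesis .
qed

lemma vert_adj_cell_iff:
  assumes "Suc t < N"
  shows "vert_adj (Qshift w) (shifted_staircase n) (left t, right t - 1)
    \<longleftrightarrow> swapped (Suc t) = (Suc (left t), right t)"
proof -
  have t: "t < N" using assms by simp
  have "vert_adj (Qshift w) (shifted_staircase n) (left t, right t - 1)
      \<longleftrightarrow> (Suc (left t), right t - 1) \<in> shifted_staircase n
        \<and> Qshift w (Suc (left t), right t - 1) = Suc (Suc t)"
    unfolding vert_adj_def using cell_of_entry(2)[OF t] by simp
  also have "\<dots> \<longleftrightarrow> swapped (Suc t) = (Suc (left t), right t)"
  proof (cases "(Suc (left t), right t - 1) \<in> shifted_staircase n")
    case True
    then show ?thesis using Qshift_eq_Suc_iff[OF True assms] swapped_range[OF t] by simp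
  next
    case False
    then have "right t \<le> Suc (left t)"
      using swapped_range[OF t] unfolding shifted_staircase_def by auto
    then show ?thesis using False swapped_range[OF assms] by (auto simp: swapped_def)
  qed
  finally show ?thesis .
qed

lemma sigma_Suc_nth_pos:
  assumes "t < N"
  shows "sigma (Suc t) ! pos t = right t" and "sigma (Suc t) ! Suc (pos t) = left t"
  using Suc_pos_less_length[OF assms]
  by (simp_all add: sigma_Suc[OF assms] nth_swap_adj left_def right_def)

lemma ascending_letters_iff:
  assumes "Suc t < N"
  shows "w ! Suc t = Suc (w ! t) \<longleftrightarrow> swapped (Suc t) = (left t, Suc (right t))"
proof
  assume ascent: "w ! Suc t = Suc (w ! t)"
  then have "pos (Suc t) = Suc (pos t)" using Suc_pos[of t] Suc_pos[OF assms] assms by simp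
  then have "left (Suc t) = left t" using sigma_Suc_nth_pos(2)[of t] assms by (simp add: left_def)
  moreover have "right (Suc t) = Suc (right t)"
    using ascent calculation letter_eq_right_minus_left[of t] letter_eq_right_minus_left[OF assms]
      swapped_range[of t] swapped_range[OF assms] assms by (simp; arith)
  ultimately show "swapped (Suc t) = (left t, Suc (right t))" by (simp add: swapped_def)
next
  assume "swapped (Suc t) = (left t, Suc (right t))"
  then show "w ! Suc t = Suc (w ! t)"
    using letter_eq_right_minus_left[of t] letter_eq_right_minus_left[OF assms]
      swapped_range[of t] assms by (simp add: swapped_def; arith)
qed

lemma descending_letters_iff:
  assumes "Suc t < N"
  shows "w ! t = Suc (w ! Suc t) \<longleftrightarrow> swapped (Suc t) = (Suc (left t), right t)"
proof
  assume descent: "w ! t = Suc (w ! Suc t)"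
  then have "Suc (pos (Suc t)) = pos t" using Suc_pos[of t] Suc_pos[OF assms] assms by simp
  then have "right (Suc t) = right t" using sigma_Suc_nth_pos(1)[of t] assms by (simp add: right_def)
  moreover have "left (Suc t) = Suc (left t)"
    using descent calculation letter_eq_right_minus_left[of t] letter_eq_right_minus_left[OF assms]
      swapped_range[of t] swapped_range[OF assms] assms by (simp; arith)
  ultimately show "swapped (Suc t) = (Suc (left t), right t)" by (simp add: swapped_def)
next
  assume "swapped (Suc t) = (Suc (left t), right t)"
  then show "w ! t = Suc (w ! Suc t)"
    using letter_eq_right_minus_left[of t] letter_eq_right_minus_left[OF assms]
      swapped_range[of t] swapped_range[OF assms] assms by (simp add: swapped_def; arith)
qed

end

theorem mainTheorem10:
  fixes n k :: nat and w :: "nat list"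
  assumes "avoiding132 n w"
    and "1 \<le> k" and "k \<le> (n choose 2) - 1"
  defines "u \<equiv> THE c. c \<in> shifted_staircase n \<and> Qshift w c = k"
  shows "((\<exists>j. letter w k = j \<and> letter w (k + 1) = j + 1)
            \<longleftrightarrow> horiz_adj (Qshift w) (shifted_staircase n) u)
       \<and> ((\<exists>j. letter w k = j + 1 \<and> letter w (k + 1) = j)
            \<longleftrightarrow> vert_adj (Qshift w) (shifted_staircase n) u)"
proof -
  interpret avoiding_network n w by unfold_locales (rule assms(1))
  define t where "t = k - 1"
  have t: "Suc t < length w" "k = Suc t" using assms(2,3) length_w t_def by auto
  have u: "u = (left t, right t - 1)" unfolding u_def using the_cell_of_entry[of t] t by simp
  have letters: "letter w k = w ! t" "letter w (k + 1) = w ! Suc t"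
    unfolding letter_def using t by simp_all
  show ?thesis
    unfolding u letters horiz_adj_cell_iff[OF t(1)] vert_adj_cell_iff[OF t(1)]
      ascending_letters_iff[OF t(1), symmetric] descending_letters_iff[OF t(1), symmetric]
    by auto
qed

end
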